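(* For each $x_{k-1}$, $$-\ln\int_{\mathcal{U}}q(u_k\mid x_{k-1})\exp\Big(-D_{KL}\big(\bar p(\cdot\mid x_{k-1},u_k)\|q(\cdot\mid x_{k-1},u_k)\big)-\mathbb{E}_{\bar p(\cdot\mid x_{k-1},u_k)}[\bar c(X_k)]-c^{(u)}_k(u_k)\Big)du_k$$ $$<-\ln\int_{\mathcal{U}}q(u_k\mid x_{k-1})\exp\Big(-\eta_k(x_{k-1},u_k)-\tilde c(x_{k-1},u_k)-c^{(u)}_k(u_k)\Big)du_k,$$ where $\tilde c(x_{k-1},u_k)=\min_{\alpha\ge0}\tilde V_\alpha(x_{k-1},u_k)$ with $\tilde V_0=M(x_{k-1},u_k):=\limsup_{x_k\in\mathrm{supp}\,\bar p(\cdot\mid x_{k-1},u_k)}\ln\big(\bar p(x_k\mid x_{k-1},u_k)e^{\bar c(x_k)}/q(x_k\mid x_{k-1},u_k)\big)$ and, for $\alpha>0$, $\tilde V_\alpha(x_{k-1},u_k)=\alpha\ln\mathbb{E}_{\bar p(\cdot\mid x_{k-1},u_k)}\big[\big(\bar p(X_k\mid x_{k-1},u_k)e^{\bar c(X_k)}/q(X_k\mid x_{k-1},u_k)\big)^{1/\alpha}\big]+\alpha\eta_k(x_{k-1},u_k)$. (That is, an agent affected by ambiguity cannot achieve a lower cost than the optimal cost of an ambiguity-free agent.)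
   Context: State space $\mathcal{X}\subseteq\mathbb{K}^n$, action space $\mathcal{U}\subseteq\mathbb{K}^p$, $\mathbb{K}\in\{\mathbb{R},\mathbb{Z}\}$ (pdfs or pmfs); $D_{KL}(p\|q)=\int p\ln(p/q)$. $q(u_k\mid x_{k-1})$ is a reference policy; $\bar p(x_k\mid x_{k-1},u_k)$ a nominal model; $q(x_k\mid x_{k-1},u_k)$ a bounded generative model with $\mathrm{supp}\,\bar p\subseteq\mathrm{supp}\,q$; $\eta_k(x_{k-1},u_k)>0$ an ambiguity radius uniformly bounded by a finite constant; $\bar c:\mathcal{X}\to\mathbb{R}$ non-negative and bounded; $c^{(u)}_k:\mathcal{U}\to\mathbb{R}$ a non-negative, lower bounded action cost. *)

theory Defs
  imports "HOL-Analysis.Analysis"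
begin

text \<open>Reference measures. The flag disc selects the case K = Z (pmfs, counting
measure on a subset of the integer lattice) versus K = R (pdfs, Lebesgue measure
on a Borel subset).\<close>

definition admissible_space :: "bool \<Rightarrow> 'a::euclidean_space set \<Rightarrow> bool" where
  "admissible_space disc S \<longleftrightarrow>
     (if disc then S \<subseteq> {x. \<forall>b\<in>Basis. x \<bullet> b \<in> \<int>} else S \<in> sets lborel)"

definition ref_measure :: "bool \<Rightarrow> 'a::euclidean_space set \<Rightarrow> 'a measure" where
  "ref_measure disc S = (if disc then count_space S else restrict_space lborel S)"

definition KL :: "'a measure \<Rightarrow> ('a \<Rightarrow> real) \<Rightarrow> ('a \<Rightarrow> real) \<Rightarrow> real" where
  "KL M p q = (\<integral>x. p x * ln (p x / q x) \<partial>M)"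

definition expect :: "'a measure \<Rightarrow> ('a \<Rightarrow> real) \<Rightarrow> ('a \<Rightarrow> real) \<Rightarrow> real" where
  "expect M p f = (\<integral>x. p x * f x \<partial>M)"

definition Mval :: "'a set \<Rightarrow> ('a \<Rightarrow> real) \<Rightarrow> ('a \<Rightarrow> real) \<Rightarrow> ('a \<Rightarrow> real) \<Rightarrow> ereal" where
  "Mval S p q c = (SUP x\<in>{x\<in>S. p x > 0}. ereal (ln (p x * exp (c x) / q x)))"

definition Valpha :: "'a measure \<Rightarrow> ('a \<Rightarrow> real) \<Rightarrow> ('a \<Rightarrow> real) \<Rightarrow> ('a \<Rightarrow> real) \<Rightarrow> real \<Rightarrow> real \<Rightarrow> ereal" where
  "Valpha M p q c eta \<alpha> =
     (let E = (\<integral>\<^sup>+x. ennreal (p x * (p x * exp (c x) / q x) powr (1 / \<alpha>)) \<partial>M)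
      in if E = \<infinity> then \<infinity> else ereal (\<alpha> * ln (enn2real E) + \<alpha> * eta))"

definition Vtilde :: "'a measure \<Rightarrow> ('a \<Rightarrow> real) \<Rightarrow> ('a \<Rightarrow> real) \<Rightarrow> ('a \<Rightarrow> real) \<Rightarrow> real \<Rightarrow> real \<Rightarrow> ereal" where
  "Vtilde M p q c eta \<alpha> = (if \<alpha> = 0 then Mval (space M) p q c else Valpha M p q c eta \<alpha>)"

definition ctilde :: "'a measure \<Rightarrow> ('a \<Rightarrow> real) \<Rightarrow> ('a \<Rightarrow> real) \<Rightarrow> ('a \<Rightarrow> real) \<Rightarrow> real \<Rightarrow> ereal" where
  "ctilde M p q c eta = (INF \<alpha>\<in>{0..}. Vtilde M p q c eta \<alpha>)"

text \<open>exp of an extended real (exp(-infinity) = 0; the +infinity case never arises below).\<close>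
definition exp_ereal :: "ereal \<Rightarrow> real" where
  "exp_ereal z = (case z of ereal r \<Rightarrow> exp r | _ \<Rightarrow> 0)"

definition neg_ln :: "real \<Rightarrow> ereal" where
  "neg_ln t = (if t > 0 then ereal (- ln t) else \<infinity>)"

end

theory Submission
  imports Defs
begin

text \<open>For every action u, D_KL(p||q) + E_p[c] is a lower bound for each V_alpha: for alpha = 0
because the integrand p ln (p e^c / q) is at most p times its supremum M over the support of p,
and for alpha > 0 by Jensen's inequality for ln applied to (p e^c / q)^(1/alpha) under p, with
alpha eta >= 0 to spare. Hence the ambiguity-free exponent exceeds the ambiguous one by at least
eta > 0 at every u. Integrating against the reference policy, a probability density, keeps the
inequality strict, and -ln is strictly decreasing.\<close>

lemma integral_pos_of_supp_superset:
  fixes h w :: "'a \<Rightarrow> real"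
  assumes "integrable M h" and "\<forall>x\<in>space M. 0 \<le> h x"
    and "\<forall>x\<in>space M. h x = 0 \<longrightarrow> w x = 0"
    and "w \<in> borel_measurable M" and "integral\<^sup>L M w \<noteq> 0"
  shows "integral\<^sup>L M h > 0"
proof -
  have "integral\<^sup>L M h \<ge> 0" using assms(2) by (intro integral_nonneg_AE AE_I2) auto
  moreover have "integral\<^sup>L M h \<noteq> 0"
  proof
    assume "integral\<^sup>L M h = 0"
    then have "AE x in M. h x = 0" using integral_nonneg_eq_0_iff_AE[OF assms(1)] assms(2) by auto
    then have "AE x in M. w x = 0" by (rule AE_mp) (use assms(3) in \<open>auto intro!: AE_I2\<close>)
    then have "integral\<^sup>L M w = 0"
      using integral_cong_AE[of w M "\<lambda>_. 0"] assms(4) by simp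
    with assms(5) show False ..
  qed
  ultimately show ?thesis by linarith
qed

lemma mult_ln_div_ge_diff:
  fixes p q :: real
  assumes "0 \<le> p" and "0 \<le> q" and "0 < p \<longrightarrow> 0 < q"
  shows "p - q \<le> p * ln (p / q)"
proof (cases "p = 0")
  case False
  with assms have p: "0 < p" and q: "0 < q" by auto
  have "ln (q / p) \<le> q / p - 1" using p q by (intro ln_le_minus_one) auto
  then have "p * (1 - q / p) \<le> p * ln (p / q)"
    using p q by (intro mult_left_mono) (auto simp: ln_div)
  moreover have "p * (1 - q / p) = p - q" using p by (simp add: field_simps)
  ultimately show ?thesis by simp
qed (use assms in auto)

lemma KL_nonneg:
  assumes "integrable M p" and "integral\<^sup>L M p = 1" and "\<forall>x\<in>space M. 0 \<le> p x"
    and "integrable M q" and "integral\<^sup>L M q = 1" and "\<forall>x\<in>space M. 0 \<le> q x"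
    and "\<forall>x\<in>space M. 0 < p x \<longrightarrow> 0 < q x"
    and "integrable M (\<lambda>x. p x * ln (p x / q x))"
  shows "0 \<le> KL M p q"
proof -
  have "(\<integral>x. p x - q x \<partial>M) \<le> (\<integral>x. p x * ln (p x / q x) \<partial>M)"
    using assms by (intro integral_mono mult_ln_div_ge_diff) auto
  then show ?thesis using assms(1,2,4,5) by (simp add: KL_def)
qed

lemma integral_mult_le_SUP_supp:
  fixes p f :: "'a \<Rightarrow> real"
  assumes "integrable M p" and "integral\<^sup>L M p = 1" and "\<forall>x\<in>space M. 0 \<le> p x"
    and "integrable M (\<lambda>x. p x * f x)"
  shows "ereal (\<integral>x. p x * f x \<partial>M) \<le> (SUP x\<in>{x\<in>space M. 0 < p x}. ereal (f x))"
    (is "_ \<le> ?S")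
proof -
  obtain x0 where x0: "x0 \<in> space M" "0 < p x0"
  proof (rule ccontr)
    assume "\<not> thesis"
    then have "\<forall>x\<in>space M. p x = 0" using that assms(3) by force
    then have "integral\<^sup>L M p = 0" by (simp add: Bochner_Integration.integral_cong)
    with assms(2) show False by simp
  qed
  have upper: "ereal (f x) \<le> ?S" if "x \<in> space M" "0 < p x" for x
    using that by (intro SUP_upper) auto
  show ?thesis
  proof (cases ?S)
    case (real t)
    have "p x * f x \<le> p x * t" if "x \<in> space M" for x
      using that upper[OF that] real assms(3) by (cases "p x = 0") (auto intro!: mult_left_mono)
    then have "(\<integral>x. p x * f x \<partial>M) \<le> (\<integral>x. p x * t \<partial>M)"
      using assms by (intro integral_mono) auto
    then show ?thesis using real assms(2) by simp
  next
    case MInf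
    then show ?thesis using upper[OF x0] by simp
  qed simp
qed

lemma integral_mult_ln_le_ln_integral:
  fixes p s :: "'a \<Rightarrow> real"
  assumes "integrable M p" and "integral\<^sup>L M p = 1" and p0: "\<forall>x\<in>space M. 0 \<le> p x"
    and s0: "\<forall>x\<in>space M. 0 < p x \<longrightarrow> 0 < s x"
    and ps: "integrable M (\<lambda>x. p x * s x)" and pln: "integrable M (\<lambda>x. p x * ln (s x))"
  shows "(\<integral>x. p x * ln (s x) \<partial>M) \<le> ln (\<integral>x. p x * s x \<partial>M)"
proof -
  define Z where "Z = (\<integral>x. p x * s x \<partial>M)"
  have Z: "0 < Z"
    unfolding Z_def using assms
    by (intro integral_pos_of_supp_superset[where w = p]) (auto simp: order.order_iff_strict)
  have "p x * ln (s x) \<le> p x * (s x / Z - 1 + ln Z)" if "x \<in> space M" for x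
  proof (cases "p x = 0")
    case False
    with that p0 s0 have "0 < p x" "0 < s x" by (auto simp: order.order_iff_strict)
    moreover from \<open>0 < s x\<close> Z have "ln (s x / Z) \<le> s x / Z - 1" by (intro ln_le_minus_one) auto
    ultimately show ?thesis using Z by (intro mult_left_mono) (auto simp: ln_div)
  qed simp
  then have "(\<integral>x. p x * ln (s x) \<partial>M) \<le> (\<integral>x. p x * s x / Z - p x + p x * ln Z \<partial>M)"
    using ps pln assms(1) by (intro integral_mono) (auto simp: algebra_simps)
  also have "\<dots> = ln Z"
    using ps assms(1,2) Z by (simp add: Z_def)
  finally show ?thesis by (simp add: Z_def)
qed

lemma integrable_mult_bounded:
  fixes p c :: "'a \<Rightarrow> real"
  assumes "integrable M p" and "c \<in> borel_measurable M" and "\<forall>x\<in>space M. \<bar>c x\<bar> \<le> B"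
  shows "integrable M (\<lambda>x. p x * c x)"
proof (rule Bochner_Integration.integrable_bound)
  show "integrable M (\<lambda>x. B * p x)" using assms(1) by simp
  have "\<bar>p x * c x\<bar> \<le> \<bar>B * p x\<bar>" if "x \<in> space M" for x
  proof -
    have "\<bar>c x\<bar> \<le> \<bar>B\<bar>" using assms(3) that by force
    then show ?thesis by (simp add: abs_mult) (metis abs_ge_zero mult.commute mult_right_mono)
  qed
  then show "AE x in M. norm (p x * c x) \<le> norm (B * p x)" by auto
qed (use assms in auto)

lemma KL_plus_expect_has_integral:
  fixes p q c :: "'a \<Rightarrow> real"
  assumes "integrable M p" and p0: "\<forall>x\<in>space M. 0 \<le> p x"
    and supp: "\<forall>x\<in>space M. 0 < p x \<longrightarrow> 0 < q x"
    and "c \<in> borel_measurable M" and "\<forall>x\<in>space M. \<bar>c x\<bar> \<le> B"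
    and "integrable M (\<lambda>x. p x * ln (p x / q x))"
  shows "has_bochner_integral M (\<lambda>x. p x * ln (p x * exp (c x) / q x)) (KL M p q + expect M p c)"
proof -
  have "integrable M (\<lambda>x. p x * c x)" using assms(1,4,5) by (rule integrable_mult_bounded)
  then have sum: "has_bochner_integral M (\<lambda>x. p x * ln (p x / q x) + p x * c x)
      (KL M p q + expect M p c)"
    unfolding KL_def expect_def
    by (intro has_bochner_integral_add has_bochner_integral_integrable assms(6))
  have eq: "p x * ln (p x / q x) + p x * c x = p x * ln (p x * exp (c x) / q x)"
    if "x \<in> space M" for x
  proof (cases "0 < p x")
    case True
    with that supp have "0 < q x" by blast
    with True have "ln (p x * exp (c x) / q x) = ln (p x / q x) + c x" by (simp add: ln_div ln_mult)
    then show ?thesis by (simp add: distrib_left)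
  next
    case False
    with that p0 have "p x = 0" by force
    then show ?thesis by simp
  qed
  then show ?thesis by (rule has_bochner_integral_cong[THEN iffD1, OF refl _ refl sum])
qed

lemma integral_log_ratio_le_Valpha:
  fixes p q c :: "'a \<Rightarrow> real"
  assumes p: "integrable M p" "integral\<^sup>L M p = 1" "\<forall>x\<in>space M. 0 \<le> p x"
    and supp: "\<forall>x\<in>space M. 0 < p x \<longrightarrow> 0 < q x"
    and [measurable]: "q \<in> borel_measurable M" "c \<in> borel_measurable M"
    and L: "integrable M (\<lambda>x. p x * ln (p x * exp (c x) / q x))"
    and "0 \<le> eta" and "0 < a"
  shows "ereal (\<integral>x. p x * ln (p x * exp (c x) / q x) \<partial>M) \<le> Valpha M p q c eta a"
proof -
  define r where "r x = p x * exp (c x) / q x" for x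
  define s where "s x = r x powr (1 / a)" for x
  define E where "E = (\<integral>\<^sup>+x. ennreal (p x * s x) \<partial>M)"
  have V: "Valpha M p q c eta a = (if E = \<infinity> then \<infinity> else ereal (a * ln (enn2real E) + a * eta))"
    by (simp add: Valpha_def E_def s_def r_def Let_def)
  show ?thesis
  proof (cases "E = \<infinity>")
    case False
    have [measurable]: "p \<in> borel_measurable M" using p(1) by simp
    have ps: "has_bochner_integral M (\<lambda>x. p x * s x) (enn2real E)"
      using False p(3) unfolding E_def s_def r_def
      by (intro has_bochner_integral_nn_integral) (auto simp: less_top)
    have s_pos: "\<forall>x\<in>space M. 0 < p x \<longrightarrow> 0 < s x"
      using supp by (auto simp: s_def r_def)
    have ln_s: "p x * ln (s x) = (1 / a) * (p x * ln (r x))" for x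
      by (simp add: s_def)
    have "integrable M (\<lambda>x. (1 / a) * (p x * ln (r x)))"
      using L unfolding r_def by (rule integrable_mult_right)
    then have "(\<integral>x. p x * ln (s x) \<partial>M) \<le> ln (\<integral>x. p x * s x \<partial>M)"
      using ps s_pos unfolding ln_s[symmetric]
      by (intro integral_mult_ln_le_ln_integral[OF p]) (auto simp: has_bochner_integral_iff)
    then have "(1 / a) * (\<integral>x. p x * ln (r x) \<partial>M) \<le> ln (enn2real E)"
      using ps unfolding ln_s by (simp add: has_bochner_integral_iff)
    then have "(\<integral>x. p x * ln (r x) \<partial>M) \<le> a * ln (enn2real E)"
      using \<open>0 < a\<close> by (simp add: field_simps)
    moreover have "0 \<le> a * eta" using \<open>0 \<le> eta\<close> \<open>0 < a\<close> by simp
    ultimately show ?thesis using V False by (simp add: r_def)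
  qed (simp add: V)
qed

lemma KL_plus_expect_le_ctilde:
  fixes p q c :: "'a \<Rightarrow> real"
  assumes p: "integrable M p" "integral\<^sup>L M p = 1" "\<forall>x\<in>space M. 0 \<le> p x"
    and supp: "\<forall>x\<in>space M. 0 < p x \<longrightarrow> 0 < q x" and "q \<in> borel_measurable M"
    and "c \<in> borel_measurable M" and "\<forall>x\<in>space M. \<bar>c x\<bar> \<le> B"
    and "integrable M (\<lambda>x. p x * ln (p x / q x))" and "0 \<le> eta"
  shows "ereal (KL M p q + expect M p c) \<le> ctilde M p q c eta"
proof -
  have L: "has_bochner_integral M (\<lambda>x. p x * ln (p x * exp (c x) / q x)) (KL M p q + expect M p c)"
    using assms by (intro KL_plus_expect_has_integral) auto
  have "ereal (KL M p q + expect M p c) \<le> Vtilde M p q c eta a" if "0 \<le> a" for a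
  proof (cases "a = 0")
    case True
    then show ?thesis
      using integral_mult_le_SUP_supp[OF p, of "\<lambda>x. ln (p x * exp (c x) / q x)"] L
      by (simp add: Vtilde_def Mval_def has_bochner_integral_iff)
  next
    case False
    with that have "0 < a" by simp
    with L assms have "ereal (KL M p q + expect M p c) \<le> Valpha M p q c eta a"
      using integral_log_ratio_le_Valpha[OF p supp, of c eta a]
      by (auto simp: has_bochner_integral_iff)
    with False show ?thesis by (simp add: Vtilde_def)
  qed
  then show ?thesis unfolding ctilde_def by (auto intro: INF_greatest)
qed

lemma space_ref_measure [simp]: "space (ref_measure disc S) = S"
  by (simp add: ref_measure_def space_restrict_space)

lemma countable_integer_lattice:
  "countable {x :: 'a :: euclidean_space. \<forall>b\<in>Basis. x \<bullet> b \<in> \<int>}" (is "countable ?Z")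
proof (rule countable_image_inj_on)
  let ?f = "\<lambda>x :: 'a. restrict (\<lambda>b. \<lfloor>x \<bullet> b\<rfloor>) Basis"
  have "?f ` ?Z \<subseteq> Basis \<rightarrow>\<^sub>E (UNIV :: int set)" by auto
  then show "countable (?f ` ?Z)"
    by (rule countable_subset) (intro countable_PiE finite_Basis countableI_type)
  have floor_eq: "of_int \<lfloor>x \<bullet> b\<rfloor> = x \<bullet> b" if "x \<in> ?Z" "b \<in> Basis" for x b
    using that by (auto elim!: Ints_cases)
  show "inj_on ?f ?Z"
  proof (rule inj_onI)
    fix x y assume x: "x \<in> ?Z" and y: "y \<in> ?Z" and "?f x = ?f y"
    have "x \<bullet> b = y \<bullet> b" if b: "b \<in> Basis" for b
    proof -
      have "\<lfloor>x \<bullet> b\<rfloor> = \<lfloor>y \<bullet> b\<rfloor>" using fun_cong[OF \<open>?f x = ?f y\<close>, of b] b by simp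
      then show ?thesis using floor_eq[OF x b] floor_eq[OF y b] by metis
    qed
    then show "x = y" by (rule euclidean_eqI)
  qed
qed

lemma sigma_finite_ref_measure:
  assumes "admissible_space disc S"
  shows "sigma_finite_measure (ref_measure disc S)"
proof (cases disc)
  case True
  with assms have "countable S"
    using countable_subset[OF _ countable_integer_lattice] by (simp add: admissible_space_def)
  with True show ?thesis by (simp add: ref_measure_def sigma_finite_measure_count_space_countable)
next
  case False
  with assms show ?thesis
    by (simp add: ref_measure_def admissible_space_def
        sigma_finite_measure_restrict_space[OF sigma_finite_lborel])
qed

lemma borel_measurable_KL:
  assumes "sigma_finite_measure N"
    and [measurable]: "(\<lambda>(u, y). p u y) \<in> borel_measurable (M \<Otimes>\<^sub>M N)"
      "(\<lambda>(u, y). q u y) \<in> borel_measurable (M \<Otimes>\<^sub>M N)"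
  shows "(\<lambda>u. KL N (p u) (q u)) \<in> borel_measurable M"
  unfolding KL_def
  by (rule sigma_finite_measure.borel_measurable_lebesgue_integral[OF assms(1)]) measurable

lemma borel_measurable_expect:
  assumes "sigma_finite_measure N"
    and [measurable]: "(\<lambda>(u, y). p u y) \<in> borel_measurable (M \<Otimes>\<^sub>M N)" "c \<in> borel_measurable N"
  shows "(\<lambda>u. expect N (p u) c) \<in> borel_measurable M"
  unfolding expect_def
  by (rule sigma_finite_measure.borel_measurable_lebesgue_integral[OF assms(1)]) measurable

lemma exp_ereal_nonneg: "0 \<le> exp_ereal z"
  by (cases z) (auto simp: exp_ereal_def)

lemma exp_ereal_uminus_less: "ereal a < z \<Longrightarrow> exp_ereal (- z) < exp (- a)"
  by (cases z) (auto simp: exp_ereal_def)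

lemma neg_ln_strict_antimono: "0 < s \<Longrightarrow> t < s \<Longrightarrow> neg_ln s < neg_ln t"
  by (auto simp: neg_ln_def)

lemma integral_density_mult_less:
  fixes w f g :: "'a \<Rightarrow> real"
  assumes w: "integrable M w" "integral\<^sup>L M w = 1" "\<forall>x\<in>space M. 0 \<le> w x"
    and "f \<in> borel_measurable M" and fg: "\<forall>x\<in>space M. 0 \<le> g x \<and> g x < f x \<and> f x \<le> 1"
  shows "0 < (\<integral>x. w x * f x \<partial>M)" and "(\<integral>x. w x * g x \<partial>M) < (\<integral>x. w x * f x \<partial>M)"
proof -
  have [measurable]: "w \<in> borel_measurable M" using w(1) by simp
  have wf: "integrable M (\<lambda>x. w x * f x)"
  proof (rule Bochner_Integration.integrable_bound[OF w(1)])
    have "\<bar>w x * f x\<bar> \<le> \<bar>w x\<bar>" if "x \<in> space M" for x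
      using that fg w(3) by (auto simp: abs_mult intro!: mult_left_le)
    then show "AE x in M. norm (w x * f x) \<le> norm (w x)" by auto
  qed (use assms in auto)
  show pos: "0 < (\<integral>x. w x * f x \<partial>M)"
    using wf w fg by (intro integral_pos_of_supp_superset[where w = w]) auto
  \<comment> \<open>g need not be measurable; if w * g is not integrable its integral is the junk value 0.\<close>
  show "(\<integral>x. w x * g x \<partial>M) < (\<integral>x. w x * f x \<partial>M)"
  proof (cases "integrable M (\<lambda>x. w x * g x)")
    case True
    have "integrable M (\<lambda>x. w x * f x - w x * g x)" using wf True by simp
    then have "0 < (\<integral>x. w x * f x - w x * g x \<partial>M)"
      by (rule integral_pos_of_supp_superset[where w = w])
        (use w fg in \<open>auto simp: right_diff_distrib[symmetric]\<close>)
    with wf True show ?thesis by simp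
  qed (simp add: not_integrable_integral_eq pos)
qed

lemma exp_nominal_cost_le_one:
  assumes "integrable M p" "integral\<^sup>L M p = 1" "\<forall>x\<in>space M. 0 \<le> p x"
    and "integrable M q" "integral\<^sup>L M q = 1" "\<forall>x\<in>space M. 0 \<le> q x"
    and "\<forall>x\<in>space M. 0 < p x \<longrightarrow> 0 < q x" and "\<forall>x\<in>space M. 0 \<le> c x"
    and "integrable M (\<lambda>x. p x * ln (p x / q x))" and "0 \<le> cu"
  shows "exp (- KL M p q - expect M p c - cu) \<le> 1"
proof -
  have "0 \<le> KL M p q" using assms by (intro KL_nonneg) auto
  moreover have "0 \<le> expect M p c"
    unfolding expect_def using assms by (intro integral_nonneg_AE AE_I2) auto
  ultimately show ?thesis using \<open>0 \<le> cu\<close> by simp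
qed

lemma exp_robust_cost_less_exp_nominal_cost:
  fixes p q c :: "'a \<Rightarrow> real"
  assumes "integrable M p" "integral\<^sup>L M p = 1" "\<forall>x\<in>space M. 0 \<le> p x"
    and "\<forall>x\<in>space M. 0 < p x \<longrightarrow> 0 < q x" and "q \<in> borel_measurable M"
    and "c \<in> borel_measurable M" and "\<forall>x\<in>space M. \<bar>c x\<bar> \<le> B"
    and "integrable M (\<lambda>x. p x * ln (p x / q x))" and "0 < eta"
  shows "exp_ereal (- (ereal eta + ctilde M p q c eta + ereal cu))
           < exp (- KL M p q - expect M p c - cu)"
proof -
  have "ereal (KL M p q + expect M p c) \<le> ctilde M p q c eta"
    using assms by (intro KL_plus_expect_le_ctilde) auto
  then have "ereal (KL M p q + expect M p c + cu) < ereal eta + ctilde M p q c eta + ereal cu"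
    using \<open>0 < eta\<close> by (cases "ctilde M p q c eta") auto
  then have "exp_ereal (- (ereal eta + ctilde M p q c eta + ereal cu))
      < exp (- (KL M p q + expect M p c + cu))"
    by (rule exp_ereal_uminus_less)
  also have "\<dots> = exp (- KL M p q - expect M p c - cu)" by (simp add: algebra_simps)
  finally show ?thesis .
qed

theorem lemma5:
  fixes disc :: bool
    and X :: "(real^'n) set" and U :: "(real^'m) set"
    and k :: nat and xprev :: "real^'n"
    and qu :: "real^'n \<Rightarrow> real^'m \<Rightarrow> real"
    and pbar qx :: "real^'n \<Rightarrow> real^'m \<Rightarrow> real^'n \<Rightarrow> real"
    and eta :: "nat \<Rightarrow> real^'n \<Rightarrow> real^'m \<Rightarrow> real"
    and cbar :: "real^'n \<Rightarrow> real"
    and cu :: "nat \<Rightarrow> real^'m \<Rightarrow> real"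
  assumes X_ok: "admissible_space disc X" and U_ok: "admissible_space disc U"
    and xprev: "xprev \<in> X"
    and qu_nonneg: "\<forall>x\<in>X. \<forall>u\<in>U. qu x u \<ge> 0"
    and qu_meas: "\<forall>x\<in>X. qu x \<in> borel_measurable (ref_measure disc U)"
    and qu_int: "\<forall>x\<in>X. integrable (ref_measure disc U) (qu x)"
    and qu_one: "\<forall>x\<in>X. (\<integral>u. qu x u \<partial>ref_measure disc U) = 1"
    and pbar_nonneg: "\<forall>x\<in>X. \<forall>u\<in>U. \<forall>y\<in>X. pbar x u y \<ge> 0"
    and pbar_meas: "\<forall>x\<in>X. (\<lambda>(u, y). pbar x u y)
                      \<in> borel_measurable (ref_measure disc U \<Otimes>\<^sub>M ref_measure disc X)"
    and pbar_int: "\<forall>x\<in>X. \<forall>u\<in>U. integrable (ref_measure disc X) (pbar x u)"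
    and pbar_one: "\<forall>x\<in>X. \<forall>u\<in>U. (\<integral>y. pbar x u y \<partial>ref_measure disc X) = 1"
    and qx_nonneg: "\<forall>x\<in>X. \<forall>u\<in>U. \<forall>y\<in>X. qx x u y \<ge> 0"
    and qx_meas: "\<forall>x\<in>X. (\<lambda>(u, y). qx x u y)
                      \<in> borel_measurable (ref_measure disc U \<Otimes>\<^sub>M ref_measure disc X)"
    and qx_int: "\<forall>x\<in>X. \<forall>u\<in>U. integrable (ref_measure disc X) (qx x u)"
    and qx_one: "\<forall>x\<in>X. \<forall>u\<in>U. (\<integral>y. qx x u y \<partial>ref_measure disc X) = 1"
    and qx_bounded: "\<exists>B. \<forall>x\<in>X. \<forall>u\<in>U. \<forall>y\<in>X. qx x u y \<le> B"
    and supp: "\<forall>x\<in>X. \<forall>u\<in>U. \<forall>y\<in>X. pbar x u y > 0 \<longrightarrow> qx x u y > 0"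
    and eta_pos: "\<forall>j. \<forall>x\<in>X. \<forall>u\<in>U. eta j x u > 0"
    and eta_bounded: "\<exists>B. \<forall>j. \<forall>x\<in>X. \<forall>u\<in>U. eta j x u \<le> B"
    and cbar_nonneg: "\<forall>y\<in>X. cbar y \<ge> 0"
    and cbar_bounded: "\<exists>B. \<forall>y\<in>X. cbar y \<le> B"
    and cbar_meas: "cbar \<in> borel_measurable (ref_measure disc X)"
    and cu_nonneg: "\<forall>j. \<forall>u\<in>U. cu j u \<ge> 0"
    and cu_meas: "\<forall>j. cu j \<in> borel_measurable (ref_measure disc U)"
    and KL_int: "\<forall>u\<in>U. integrable (ref_measure disc X)
                   (\<lambda>y. pbar xprev u y * ln (pbar xprev u y / qx xprev u y))"
  shows "neg_ln (\<integral>u. qu xprev u *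
            exp (- KL (ref_measure disc X) (pbar xprev u) (qx xprev u)
                 - expect (ref_measure disc X) (pbar xprev u) cbar
                 - cu k u) \<partial>ref_measure disc U)
         < neg_ln (\<integral>u. qu xprev u *
            exp_ereal (- (ereal (eta k xprev u)
                          + ctilde (ref_measure disc X) (pbar xprev u) (qx xprev u) cbar (eta k xprev u)
                          + ereal (cu k u))) \<partial>ref_measure disc U)"
proof -
  let ?MX = "ref_measure disc X" and ?MU = "ref_measure disc U"
  define nominal where "nominal u =
    exp (- KL ?MX (pbar xprev u) (qx xprev u) - expect ?MX (pbar xprev u) cbar - cu k u)" for u
  define robust where "robust u = exp_ereal (- (ereal (eta k xprev u)
    + ctilde ?MX (pbar xprev u) (qx xprev u) cbar (eta k xprev u) + ereal (cu k u)))" for u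
  obtain B where B: "\<forall>y\<in>X. \<bar>cbar y\<bar> \<le> B" using cbar_bounded cbar_nonneg by force
  have "robust u < nominal u" if "u \<in> U" for u
    unfolding robust_def nominal_def
    by (rule exp_robust_cost_less_exp_nominal_cost)
      (use that xprev assms B in \<open>auto simp: measurable_Pair2\<close>)
  moreover have "nominal u \<le> 1" if "u \<in> U" for u
    unfolding nominal_def by (rule exp_nominal_cost_le_one) (use that xprev assms in auto)
  ultimately have "\<forall>u\<in>space ?MU. 0 \<le> robust u \<and> robust u < nominal u \<and> nominal u \<le> 1"
    by (simp add: robust_def exp_ereal_nonneg)
  moreover have [measurable]: "(\<lambda>u. KL ?MX (pbar xprev u) (qx xprev u)) \<in> borel_measurable ?MU"
    "(\<lambda>u. expect ?MX (pbar xprev u) cbar) \<in> borel_measurable ?MU"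
    "cu k \<in> borel_measurable ?MU"
    using sigma_finite_ref_measure[OF X_ok] pbar_meas qx_meas cbar_meas cu_meas xprev
    by (auto intro: borel_measurable_KL borel_measurable_expect)
  then have "nominal \<in> borel_measurable ?MU" unfolding nominal_def by measurable
  moreover have "integrable ?MU (qu xprev)" "integral\<^sup>L ?MU (qu xprev) = 1"
    "\<forall>u\<in>space ?MU. 0 \<le> qu xprev u"
    using xprev qu_int qu_one qu_nonneg by auto
  ultimately show ?thesis
    using integral_density_mult_less[of ?MU "qu xprev" nominal robust]
    unfolding nominal_def robust_def by (intro neg_ln_strict_antimono) auto
qed

end
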